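(* For the next-symbol prediction task $\mathrm{Learn}(n,N,q_{NSP},\pi)$, $$I(X_S;P\mid K)\le \mu_1 n\cdot\frac{d+1}{2}\cdot(1-h(\delta/2))+\mu_1 n\log N.$$
   Context: Learning task $\mathrm{Learn}(n,N,q_c,\pi)$: a problem instance $P=(D,C)$ with $C=(C_1,\dots,C_N)$ i.i.d. from $q_c$ and $D(j)=\delta_j/\sum_i\delta_i$ with $\delta_j$ i.i.d. uniform over the entries of $\pi$; the data set $X$ consists of $n$ i.i.d. examples drawn by picking $j\sim D$ then drawing from subpopulation $j$. $X_S$ is the set of singletons (examples that are the unique representative of their subpopulation in $X$), $K=|X_S|$, $\mu_1=\mathbb E[K]/n$. Component distribution $q_{NSP}$ (for $d\ge 1$, $\delta\in[0,1)$): subpopulation $j$ has a uniform reference string $c_j\in\{0,1\}^d$; an example from $j$ has $\ell$ uniform in $\{0,\dots,d-1\}$, feature $(j,z)$ with $z=\mathrm{BSC}_{\delta/2}(c_j(1{:}\ell))$ and label $y=\mathrm{BSC}_{\delta/2}(c_j(\ell+1))$; $\mathrm{BSC}_p$ flips each bit independently w.p. $p$. $h$ is binary entropy, logs base 2. *)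

theory Defs
  imports "HOL-Probability.Probability"
begin

text \<open>Binary entropy in bits (with 0 log 0 = 0, which holds since ln 0 = 0 in Isabelle).\<close>
definition bin_entropy :: "real \<Rightarrow> real" where
  "bin_entropy p = - p * log 2 p - (1 - p) * log 2 (1 - p)"

definition cond_mutual_info ::
  "real \<Rightarrow> 'w pmf \<Rightarrow> ('w \<Rightarrow> 'x) \<Rightarrow> ('w \<Rightarrow> 'y) \<Rightarrow> ('w \<Rightarrow> 'z) \<Rightarrow> real" where
  "cond_mutual_info b p X Y Z =
     (let J = map_pmf (\<lambda>w. (X w, Y w, Z w)) p;
          PXZ = map_pmf (\<lambda>w. (X w, Z w)) p;
          PYZ = map_pmf (\<lambda>w. (Y w, Z w)) p;
          PZ = map_pmf Z p
      in \<Sum>\<^sub>\<infinity>(x, y, z)\<in>set_pmf J.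
           pmf J (x, y, z) * log b (pmf J (x, y, z) * pmf PZ z / (pmf PXZ (x, z) * pmf PYZ (y, z))))"

fun iid_list :: "nat \<Rightarrow> 'a pmf \<Rightarrow> 'a list pmf" where
  "iid_list 0 q = return_pmf []"
| "iid_list (Suc m) q = do { a \<leftarrow> q; as \<leftarrow> iid_list m q; return_pmf (a # as) }"

definition bsc :: "real \<Rightarrow> bool \<Rightarrow> bool pmf" where
  "bsc p b = map_pmf (\<lambda>flip. b \<noteq> flip) (bernoulli_pmf p)"

fun bsc_list :: "real \<Rightarrow> bool list \<Rightarrow> bool list pmf" where
  "bsc_list p [] = return_pmf []"
| "bsc_list p (b # bs) = do { b' \<leftarrow> bsc p b; bs' \<leftarrow> bsc_list p bs; return_pmf (b' # bs') }"

text \<open>Component distribution of a subpopulation with reference string c (length d), for q_NSP: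
  an example is (z, y) where z = BSC(c(1:l)) and y = BSC(c(l+1)), l uniform in {0..d-1};
  the feature is (j, z) once the subpopulation index j is attached. Indices are 0-based.\<close>
definition nsp_component :: "nat \<Rightarrow> real \<Rightarrow> bool list \<Rightarrow> (bool list \<times> bool) pmf" where
  "nsp_component d \<delta> c = do {
      l \<leftarrow> pmf_of_set {0..<d};
      z \<leftarrow> bsc_list (\<delta> / 2) (take l c);
      y \<leftarrow> bsc (\<delta> / 2) (c ! l);
      return_pmf (z, y) }"

definition q_NSP :: "nat \<Rightarrow> real \<Rightarrow> (bool list \<times> bool) pmf pmf" where
  "q_NSP d \<delta> = map_pmf (nsp_component d \<delta>) (pmf_of_set {c. length c = d})"

text \<open>The learning task Learn(n, N, q_c, pi): joint distribution of the problem instance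
  P = (D, C) (D given as the list [D(0),...,D(N-1)], C the list of N component
  distributions) and the data set X, a list of n examples (j, e) with j the
  subpopulation index and e the draw from subpopulation j.\<close>
definition learn_pmf :: "nat \<Rightarrow> nat \<Rightarrow> 'e pmf pmf \<Rightarrow> real list \<Rightarrow>
    ((real list \<times> 'e pmf list) \<times> (nat \<times> 'e) list) pmf" where
  "learn_pmf n N qc \<pi> = do {
      C \<leftarrow> iid_list N qc;
      \<delta>s \<leftarrow> iid_list N (map_pmf (\<lambda>i. \<pi> ! i) (pmf_of_set {..<length \<pi>}));
      let D = map (\<lambda>x. x / sum_list \<delta>s) \<delta>s;
      X \<leftarrow> iid_list n (do {
              j \<leftarrow> embed_pmf (\<lambda>j. if j < N then D ! j else 0);
              e \<leftarrow> C ! j;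
              return_pmf (j, e) });
      return_pmf ((D, C), X) }"

definition singletons :: "(nat \<times> 'e) list \<Rightarrow> (nat \<times> 'e) set" where
  "singletons X = {x \<in> set X. length (filter (\<lambda>y. fst y = fst x) X) = 1}"

end

theory Submission
  imports Defs
begin

text \<open>Given the instance \<open>P\<close> and \<open>K = k\<close>, a set \<open>s\<close> of singletons has probability at most
  \<open>\<Prod>(j, e)\<in>s. C\<^sub>j(e)\<close>: the singletons lie in distinct subpopulations, so they are independent
  draws of their components. The set of \<open>k\<close> independent draws from \<open>\<nu> = Unif[N] \<times> q\<^sub>0\<close>, where
  \<open>q\<^sub>0\<close> is the component with uniformly random bits, gives \<open>s\<close> probability at least
  \<open>\<Prod>(j, e)\<in>s. \<nu>(j, e)\<close>. By the variational bound \<open>I(X; Y | Z) \<le> E log (R / Q)\<close>, the information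
  is at most \<open>E \<Sum>(j, e)\<in>X\<^sub>S. log (C\<^sub>j(e) / \<nu>(j, e))\<close>, that is \<open>E K\<close> times \<open>log N\<close> plus the
  divergence of a component from \<open>q\<^sub>0\<close>. A prompt of length \<open>l\<close> and its label cost \<open>l + 1\<close> bits
  under \<open>q\<^sub>0\<close> but only \<open>(l + 1) h(\<delta>/2)\<close> bits under the component; averaging over \<open>l\<close> gives
  \<open>(d + 1)/2 \<cdot> (1 - h(\<delta>/2))\<close>.\<close>

section \<open>A variational upper bound on conditional mutual information\<close>

lemma log_le_diff_one_div_ln: "b > 1 \<Longrightarrow> x > 0 \<Longrightarrow> log b x \<le> (x - 1) / ln b"
  by (simp add: log_def divide_right_mono ln_le_minus_one)

lemma cond_mutual_info_summand_le:
  fixes a pz pxz pyz r q b :: real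
  assumes "b > 1" "a > 0" "pz > 0" "pxz > 0" "pyz > 0" "r > 0" "q > 0" "a \<le> r * pyz"
  shows "a * log b (a * pz / (pxz * pyz)) \<le> a * log b (r / q) + a * (pz * q / pxz - 1) / ln b"
proof -
  define v where "v = a * pz * q / (pxz * pyz * r)"
  have v_pos: "v > 0" using assms by (simp add: v_def)
  have "log b (a * pz / (pxz * pyz)) = log b ((r / q) * v)"
    using assms by (simp add: v_def field_simps)
  also have "\<dots> = log b (r / q) + log b v"
    using assms v_pos by (intro log_mult_pos) auto
  finally have split: "log b (a * pz / (pxz * pyz)) = log b (r / q) + log b v" .
  have "v = a / (pyz * r) * (pz * q / pxz)"
    using assms unfolding v_def by (simp add: field_simps)
  also have "\<dots> \<le> pz * q / pxz"
    using assms by (intro mult_left_le_one_le) (auto simp: field_simps)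
  finally have "log b v \<le> (pz * q / pxz - 1) / ln b"
    using log_le_diff_one_div_ln[OF assms(1) v_pos] assms(1)
    by (smt (verit) divide_right_mono ln_gt_zero)
  then show ?thesis
    unfolding split distrib_left using assms(2)
    by (metis mult_left_mono add_left_mono less_imp_le times_divide_eq_right)
qed

lemma sum_pmf_le_1: "finite A \<Longrightarrow> (\<Sum>x\<in>A. pmf p x) \<le> 1"
  using measure_measure_pmf_finite[of A p] measure_pmf.prob_le_1[of p A] by simp

lemma expectation_eq_sum_set_pmf:
  fixes f :: "'a \<Rightarrow> real"
  shows "finite (set_pmf M) \<Longrightarrow> measure_pmf.expectation M f = (\<Sum>a\<in>set_pmf M. pmf M a * f a)"
  by (subst integral_measure_pmf[of "set_pmf M"]) auto

text \<open>In expectation over \<open>(x, z)\<close>, the ratio of \<open>Q z x\<close> to the conditional law of \<open>x\<close> given \<open>z\<close>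
  is at most one.\<close>
lemma sum_pmf_snd_mult_kernel_le_1:
  fixes p :: "('x \<times> 'z) pmf" and Q :: "'z \<Rightarrow> 'x pmf"
  assumes fin: "finite (set_pmf p)"
  shows "(\<Sum>u\<in>set_pmf p. pmf (map_pmf snd p) (snd u) * pmf (Q (snd u)) (fst u)) \<le> 1"
proof -
  define PZ where "PZ = map_pmf snd p"
  have fin_PZ: "finite (set_pmf PZ)" using fin by (simp add: PZ_def)
  have "(\<Sum>u\<in>set_pmf p. pmf PZ (snd u) * pmf (Q (snd u)) (fst u))
      \<le> (\<Sum>u\<in>fst ` set_pmf p \<times> set_pmf PZ. pmf PZ (snd u) * pmf (Q (snd u)) (fst u))"
  proof (rule sum_mono2)
    show "set_pmf p \<subseteq> fst ` set_pmf p \<times> set_pmf PZ"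
      unfolding PZ_def by force
  qed (use fin fin_PZ in auto)
  also have "\<dots> = (\<Sum>x\<in>fst ` set_pmf p. \<Sum>z\<in>set_pmf PZ. pmf PZ z * pmf (Q z) x)"
    by (simp add: sum.cartesian_product case_prod_beta)
  also have "\<dots> = (\<Sum>z\<in>set_pmf PZ. pmf PZ z * (\<Sum>x\<in>fst ` set_pmf p. pmf (Q z) x))"
    by (subst sum.swap) (simp add: sum_distrib_left)
  also have "\<dots> \<le> (\<Sum>z\<in>set_pmf PZ. pmf PZ z * 1)"
    using fin by (intro sum_mono mult_left_mono sum_pmf_le_1) auto
  also have "\<dots> = 1" using sum_pmf_eq_1[OF fin_PZ] by simp
  finally show ?thesis unfolding PZ_def .
qed

text \<open>Termwise \<open>ln v \<le> v - 1\<close> with \<open>v = P(x|y,z) Q(x|z) / (R P(x|z))\<close>.\<close>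
lemma cond_mutual_info_le_expectation_log:
  fixes M :: "'w pmf" and X :: "'w \<Rightarrow> 'x" and Y :: "'w \<Rightarrow> 'y" and Z :: "'w \<Rightarrow> 'z"
    and R :: "'x \<Rightarrow> 'y \<Rightarrow> 'z \<Rightarrow> real" and Q :: "'z \<Rightarrow> 'x pmf"
  assumes fin: "finite (set_pmf M)" and b: "b > 1"
    and R_pos: "\<And>w. w \<in> set_pmf M \<Longrightarrow> R (X w) (Y w) (Z w) > 0"
    and R_dominates: "\<And>w. w \<in> set_pmf M \<Longrightarrow> pmf (map_pmf (\<lambda>w. (X w, Y w, Z w)) M) (X w, Y w, Z w)
        \<le> R (X w) (Y w) (Z w) * pmf (map_pmf (\<lambda>w. (Y w, Z w)) M) (Y w, Z w)"
    and Q_pos: "\<And>w. w \<in> set_pmf M \<Longrightarrow> pmf (Q (Z w)) (X w) > 0"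
  shows "cond_mutual_info b M X Y Z \<le>
    measure_pmf.expectation M (\<lambda>w. log b (R (X w) (Y w) (Z w) / pmf (Q (Z w)) (X w)))"
proof -
  define J where "J = map_pmf (\<lambda>w. (X w, Y w, Z w)) M"
  define PXZ where "PXZ = map_pmf (\<lambda>w. (X w, Z w)) M"
  define PYZ where "PYZ = map_pmf (\<lambda>w. (Y w, Z w)) M"
  define PZ where "PZ = map_pmf Z M"
  define T where "T = set_pmf J"
  have fin_T: "finite T" using fin by (simp add: T_def J_def)
  define g where "g = (\<lambda>(x, y, z). pmf J (x, y, z) *
      log b (pmf J (x, y, z) * pmf PZ z / (pmf PXZ (x, z) * pmf PYZ (y, z))))"
  define L where "L = (\<lambda>(x, y, z). log b (R x y z / pmf (Q z) x))"
  define h where "h = (\<lambda>(x, z). pmf PZ z * pmf (Q z) x / pmf PXZ (x, z))"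
  have cmi: "cond_mutual_info b M X Y Z = (\<Sum>t\<in>T. g t)"
    unfolding cond_mutual_info_def Let_def J_def[symmetric] PXZ_def[symmetric] PYZ_def[symmetric]
      PZ_def[symmetric] T_def[symmetric]
    using fin_T by (simp add: g_def)
  have E: "measure_pmf.expectation M (\<lambda>w. log b (R (X w) (Y w) (Z w) / pmf (Q (Z w)) (X w)))
      = (\<Sum>t\<in>T. pmf J t * L t)"
    using expectation_eq_sum_set_pmf[of J L] fin_T by (simp add: J_def L_def T_def)
  have termwise: "g t \<le> pmf J t * L t + pmf J t * (h (fst t, snd (snd t)) - 1) / ln b"
    if "t \<in> T" for t
  proof -
    from that obtain w where w: "w \<in> set_pmf M" "t = (X w, Y w, Z w)"
      unfolding T_def J_def by auto
    have "pmf J t > 0" "pmf PZ (Z w) > 0" "pmf PXZ (X w, Z w) > 0" "pmf PYZ (Y w, Z w) > 0"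
      using w unfolding J_def PZ_def PXZ_def PYZ_def by (simp_all add: pmf_positive)
    from cond_mutual_info_summand_le[OF b this[unfolded w(2)] R_pos[OF w(1)] Q_pos[OF w(1)]]
    show ?thesis using R_dominates[OF w(1)]
      unfolding w(2) g_def L_def h_def J_def PYZ_def by simp
  qed
  have sum_h: "(\<Sum>t\<in>T. pmf J t * h (fst t, snd (snd t))) \<le> 1"
  proof -
    have fin_PXZ: "finite (set_pmf PXZ)" using fin by (simp add: PXZ_def)
    have J_PXZ: "map_pmf (\<lambda>t. (fst t, snd (snd t))) J = PXZ"
      unfolding J_def PXZ_def by (simp add: pmf.map_comp o_def)
    have PXZ_PZ: "map_pmf snd PXZ = PZ"
      unfolding PXZ_def PZ_def by (simp add: pmf.map_comp o_def)
    have "(\<Sum>t\<in>T. pmf J t * h (fst t, snd (snd t)))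
        = measure_pmf.expectation J (\<lambda>t. h (fst t, snd (snd t)))"
      using expectation_eq_sum_set_pmf[of J] fin_T T_def by simp
    also have "\<dots> = measure_pmf.expectation PXZ h"
      unfolding J_PXZ[symmetric] by simp
    also have "\<dots> = (\<Sum>u\<in>set_pmf PXZ. pmf (map_pmf snd PXZ) (snd u) * pmf (Q (snd u)) (fst u))"
      unfolding expectation_eq_sum_set_pmf[OF fin_PXZ] PXZ_PZ
      by (intro sum.cong refl) (auto simp: h_def set_pmf_iff)
    also have "\<dots> \<le> 1" by (rule sum_pmf_snd_mult_kernel_le_1[OF fin_PXZ])
    finally show ?thesis .
  qed
  have sum_J: "(\<Sum>t\<in>T. pmf J t) = 1" using sum_pmf_eq_1[OF fin_T] T_def by simp
  have "(\<Sum>t\<in>T. g t) \<le> (\<Sum>t\<in>T. pmf J t * L t + pmf J t * (h (fst t, snd (snd t)) - 1) / ln b)"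
    using termwise by (intro sum_mono) auto
  also have "\<dots> = (\<Sum>t\<in>T. pmf J t * L t)
      + ((\<Sum>t\<in>T. pmf J t * h (fst t, snd (snd t))) - (\<Sum>t\<in>T. pmf J t)) / ln b"
    by (simp add: sum.distrib sum_divide_distrib[symmetric] right_diff_distrib sum_subtractf)
  also have "\<dots> \<le> (\<Sum>t\<in>T. pmf J t * L t)"
    using sum_h sum_J b by (simp add: divide_nonpos_pos)
  finally show ?thesis using cmi E by simp
qed

lemma measure_bind_pmf:
  "measure (bind_pmf M f) A = measure_pmf.expectation M (\<lambda>x. measure (f x) A)"
  unfolding measure_pmf_bind
  by (rule measure_pmf.measure_bind[where N="count_space UNIV"])
     (auto simp: space_subprob_algebra measure_pmf.subprob_space_axioms)

lemma expectation_if_eq: "measure_pmf.expectation q (\<lambda>a. if a = x then c else 0) = pmf q x * (c::real)"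
  by (subst integral_measure_pmf_real[where A="{x}"]) (auto split: if_splits)

lemma expectation_cong_set_pmf:
  fixes f g :: "'a \<Rightarrow> real"
  shows "(\<And>x. x \<in> set_pmf M \<Longrightarrow> f x = g x) \<Longrightarrow> measure_pmf.expectation M f = measure_pmf.expectation M g"
  by (rule integral_cong_AE) (auto simp: AE_measure_pmf_iff)

lemma expectation_bind_pmf_finite:
  fixes g :: "'b \<Rightarrow> real"
  assumes "finite (set_pmf A)" "\<And>a. a \<in> set_pmf A \<Longrightarrow> finite (set_pmf (f a))"
  shows "measure_pmf.expectation (bind_pmf A f) g
       = measure_pmf.expectation A (\<lambda>a. measure_pmf.expectation (f a) g)"
  using pmf_expectation_bind[of "set_pmf A" f A g] assms
  by (simp add: expectation_eq_sum_set_pmf)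

lemma pmf_bind_map_Cons: "pmf (bind_pmf A (\<lambda>a. map_pmf (Cons a) B)) (x # xs) = pmf A x * pmf B xs"
proof -
  have "pmf (map_pmf (Cons a) B) (x # xs) = (if a = x then pmf B xs else 0)" for a
    by (cases "a = x") (auto simp: pmf_map_inj' intro!: pmf_map_outside)
  then show ?thesis by (simp add: pmf_bind expectation_if_eq)
qed

lemma measure_bind_Pair_fst_eq:
  "measure (bind_pmf A (\<lambda>a. map_pmf (Pair a) (B a))) {w. fst w = a0 \<and> P (snd w)}
   = pmf A a0 * measure (B a0) {x. P x}"
proof -
  have "measure (bind_pmf A (\<lambda>a. map_pmf (Pair a) (B a))) {w. fst w = a0 \<and> P (snd w)}
     = measure_pmf.expectation A (\<lambda>a. if a = a0 then measure (B a0) {x. P x} else 0)"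
    unfolding measure_bind_pmf measure_map_pmf
    by (intro Bochner_Integration.integral_cong refl) (auto simp: vimage_def)
  also have "\<dots> = pmf A a0 * measure (B a0) {x. P x}" by (rule expectation_if_eq)
  finally show ?thesis .
qed

fun seq_pmf :: "'a pmf list \<Rightarrow> 'a list pmf" where
  "seq_pmf [] = return_pmf []"
| "seq_pmf (q # qs) = do { a \<leftarrow> q; as \<leftarrow> seq_pmf qs; return_pmf (a # as) }"

lemma set_seq_pmf:
  "es \<in> set_pmf (seq_pmf qs) \<Longrightarrow> length es = length qs \<and> (\<forall>i<length qs. es ! i \<in> set_pmf (qs ! i))"
  by (induction qs arbitrary: es) (auto simp: nth_Cons split: nat.splits)

lemma finite_set_seq_pmf: "(\<forall>q\<in>set qs. finite (set_pmf q)) \<Longrightarrow> finite (set_pmf (seq_pmf qs))"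
  by (induction qs) (auto intro!: finite_UN_I)

lemma map_nth_seq_pmf: "i < length qs \<Longrightarrow> map_pmf (\<lambda>es. es ! i) (seq_pmf qs) = qs ! i"
proof (induction qs arbitrary: i)
  case (Cons q qs)
  then show ?case
    by (cases i) (simp_all add: map_bind_pmf bind_return_pmf' map_pmf_def[symmetric]
        pmf.map_comp o_def)
qed simp

lemma prob_seq_pmf_nth_eq:
  "I \<subseteq> {..<length qs} \<Longrightarrow>
   measure (seq_pmf qs) {es. \<forall>i\<in>I. es ! i = u i} = (\<Prod>i\<in>I. pmf (qs ! i) (u i))"
proof (induction qs arbitrary: I u)
  case (Cons q qs)
  define I' where "I' = {i. Suc i \<in> I}"
  have I': "I' \<subseteq> {..<length qs}" using Cons.prems by (auto simp: I'_def)
  define c where "c = (\<Prod>i\<in>I'. pmf (qs ! i) (u (Suc i)))"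
  have IH: "measure (seq_pmf qs) {es. \<forall>i\<in>I'. es ! i = u (Suc i)} = c"
    using Cons.IH[OF I'] by (simp add: c_def)
  have preimage: "Cons a -` {es. \<forall>i\<in>I. es ! i = u i} =
      (if 0 \<in> I \<longrightarrow> a = u 0 then {es. \<forall>i\<in>I'. es ! i = u (Suc i)} else {})" for a
    by (auto simp: I'_def nth_Cons split: nat.splits)
  have "measure (seq_pmf (q # qs)) {es. \<forall>i\<in>I. es ! i = u i}
      = measure_pmf.expectation q (\<lambda>a. if 0 \<in> I \<longrightarrow> a = u 0 then c else 0)"
    unfolding seq_pmf.simps map_pmf_def[symmetric] measure_bind_pmf measure_map_pmf preimage
    by (intro Bochner_Integration.integral_cong refl) (auto simp: IH)
  also have "\<dots> = (if 0 \<in> I then pmf q (u 0) else 1) * c"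
    by (cases "0 \<in> I") (simp_all add: expectation_if_eq)
  also have "\<dots> = (\<Prod>i\<in>I. pmf ((q # qs) ! i) (u i))"
  proof -
    have "finite I'" using I' finite_subset by blast
    moreover have "(\<Prod>i\<in>Suc ` I'. pmf ((q # qs) ! i) (u i)) = c"
      unfolding c_def by (subst prod.reindex) auto
    moreover have "I = (if 0 \<in> I then insert 0 (Suc ` I') else Suc ` I')"
      by (auto simp: I'_def image_iff) (metis not0_implies_Suc)+
    ultimately show ?thesis
      by (cases "0 \<in> I") (auto simp: prod.insert)
  qed
  finally show ?case .
qed simp

lemma set_iid_list: "xs \<in> set_pmf (iid_list n q) \<Longrightarrow> length xs = n \<and> set xs \<subseteq> set_pmf q"
  by (induction n arbitrary: xs) fastforce+

lemma finite_set_iid_list: "finite (set_pmf q) \<Longrightarrow> finite (set_pmf (iid_list n q))"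
  by (induction n) (auto intro!: finite_UN_I)

lemma pmf_iid_list: "pmf (iid_list (length xs) q) xs = prod_list (map (pmf q) xs)"
  by (induction xs) (simp_all add: map_pmf_def[symmetric] pmf_bind_map_Cons)

text \<open>Drawing the elements of \<open>s\<close> in one fixed order is one way of obtaining the set \<open>s\<close>.\<close>
lemma pmf_set_iid_list_ge:
  assumes "finite s"
  shows "pmf (map_pmf set (iid_list (card s) \<nu>)) s \<ge> (\<Prod>x\<in>s. pmf \<nu> x)"
proof -
  obtain xs where xs: "set xs = s" "distinct xs" using finite_distinct_list[OF assms] by blast
  have len: "length xs = card s" using xs distinct_card by metis
  have "(\<Prod>x\<in>s. pmf \<nu> x) = pmf (iid_list (card s) \<nu>) xs"
    using xs pmf_iid_list[of xs \<nu>] len by (metis prod.distinct_set_conv_list)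
  also have "\<dots> = measure (iid_list (card s) \<nu>) {xs}" by (simp add: measure_pmf_single)
  also have "\<dots> \<le> measure (iid_list (card s) \<nu>) (set -` {s})"
    using xs by (intro measure_pmf.finite_measure_mono) auto
  also have "\<dots> = pmf (map_pmf set (iid_list (card s) \<nu>)) s" by (simp add: pmf_map)
  finally show ?thesis .
qed

definition sample_pmf :: "nat \<Rightarrow> nat pmf \<Rightarrow> (nat \<Rightarrow> 'e pmf) \<Rightarrow> (nat \<times> 'e) list pmf" where
  "sample_pmf n D C = iid_list n (do { j \<leftarrow> D; e \<leftarrow> C j; return_pmf (j, e) })"

lemma finite_set_sample_pmf:
  assumes "finite (set_pmf D)" "\<And>j. j \<in> set_pmf D \<Longrightarrow> finite (set_pmf (C j))"
  shows "finite (set_pmf (sample_pmf n D C))"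
  unfolding sample_pmf_def using assms by (intro finite_set_iid_list) (auto intro!: finite_UN_I)

lemma set_sample_pmf:
  "X \<in> set_pmf (sample_pmf n D C) \<Longrightarrow> x \<in> set X \<Longrightarrow> fst x \<in> set_pmf D \<and> snd x \<in> set_pmf (C (fst x))"
  unfolding sample_pmf_def by (force dest!: set_iid_list)

lemma sample_pmf_eq_bind_indices:
  "sample_pmf n D C = bind_pmf (iid_list n D) (\<lambda>js. map_pmf (zip js) (seq_pmf (map C js)))"
  unfolding sample_pmf_def
proof (induction n)
  case (Suc n)
  show ?case
    by (simp add: Suc bind_assoc_pmf bind_return_pmf map_pmf_def)
       (rule bind_pmf_cong[OF refl], subst bind_commute_pmf, simp)
qed (simp add: bind_return_pmf)

definition singleton_indices :: "nat list \<Rightarrow> nat set" where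
  "singleton_indices js = {i. i < length js \<and> length (filter (\<lambda>j. j = js ! i) js) = 1}"

lemma inj_on_nth_singleton_indices: "inj_on (\<lambda>i. js ! i) (singleton_indices js)"
proof (rule inj_onI)
  fix i i' assume i: "i \<in> singleton_indices js" and i': "i' \<in> singleton_indices js"
    and eq: "js ! i = js ! i'"
  have "card {k. k < length js \<and> js ! k = js ! i} = 1"
    using i by (simp add: singleton_indices_def length_filter_conv_card)
  moreover have "i \<in> {k. k < length js \<and> js ! k = js ! i}" "i' \<in> {k. k < length js \<and> js ! k = js ! i}"
    using i i' eq by (auto simp: singleton_indices_def)
  ultimately show "i = i'" by (metis card_1_singletonE singletonD)
qed

lemma inj_on_nth_pair_singleton_indices: "inj_on (\<lambda>i. (js ! i, es ! i)) (singleton_indices js)"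
  using inj_on_nth_singleton_indices[of js] by (auto simp: inj_on_def)

lemma singletons_zip:
  assumes "length es = length js"
  shows "singletons (zip js es) = (\<lambda>i. (js ! i, es ! i)) ` singleton_indices js"
proof -
  have "length (filter (\<lambda>y. fst y = a) (zip js es)) = length (filter (\<lambda>j. j = a) js)" for a
  proof -
    have "length (filter (\<lambda>y. fst y = a) (zip js es))
        = length (filter (\<lambda>j. j = a) (map fst (zip js es)))"
      by (simp add: filter_map o_def)
    then show ?thesis using assms by simp
  qed
  then show ?thesis
    using assms unfolding singletons_def singleton_indices_def by (auto simp: set_zip)
qed

lemma card_singletons_zip:
  "length es = length js \<Longrightarrow> card (singletons (zip js es)) = card (singleton_indices js)"
  by (simp add: singletons_zip card_image inj_on_nth_pair_singleton_indices)

text \<open>Given the indices \<open>js\<close>, the singletons are determined by the draws at the positions in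
  \<open>singleton_indices js\<close>, which are independent; the number of singletons depends on \<open>js\<close> only.\<close>
lemma prob_singletons_zip_eq_le:
  fixes C :: "nat \<Rightarrow> 'e pmf" and js :: "nat list"
  defines "E \<equiv> seq_pmf (map C js)"
  shows "measure E {es. singletons (zip js es) = s}
     \<le> (\<Prod>x\<in>s. pmf (C (fst x)) (snd x)) * measure E {es. card (singletons (zip js es)) = card s}"
proof (cases "\<exists>es0\<in>set_pmf E. singletons (zip js es0) = s")
  case True
  then obtain es0 where es0: "es0 \<in> set_pmf E" "singletons (zip js es0) = s" by blast
  have len: "length es = length js" if "es \<in> set_pmf E" for es
    using set_seq_pmf[OF that[unfolded E_def]] by simp
  have s_eq: "s = (\<lambda>i. (js ! i, es0 ! i)) ` singleton_indices js"
    using es0(2) singletons_zip[OF len[OF es0(1)]] by simp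
  have determined: "{es. singletons (zip js es) = s} \<inter> set_pmf E
      \<subseteq> {es. \<forall>i\<in>singleton_indices js. es ! i = es0 ! i}"
  proof (intro subsetI CollectI ballI)
    fix es i assume es: "es \<in> {es. singletons (zip js es) = s} \<inter> set_pmf E"
      and i: "i \<in> singleton_indices js"
    have "(js ! i, es ! i) \<in> s" using es singletons_zip[OF len] i by auto
    then obtain i' where "i' \<in> singleton_indices js" "(js ! i, es ! i) = (js ! i', es0 ! i')"
      using s_eq by auto
    then show "es ! i = es0 ! i"
      using inj_on_nth_singleton_indices[of js] i by (auto simp: inj_on_def)
  qed
  have "measure E {es. singletons (zip js es) = s}
      = measure E ({es. singletons (zip js es) = s} \<inter> set_pmf E)"
    by (simp add: measure_Int_set_pmf)
  also have "\<dots> \<le> measure E {es. \<forall>i\<in>singleton_indices js. es ! i = es0 ! i}"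
    by (rule measure_pmf.finite_measure_mono[OF determined]) simp
  also have "\<dots> = (\<Prod>i\<in>singleton_indices js. pmf (C (js ! i)) (es0 ! i))"
    unfolding E_def by (subst prob_seq_pmf_nth_eq) (auto simp: singleton_indices_def)
  also have "\<dots> = (\<Prod>x\<in>s. pmf (C (fst x)) (snd x))"
    unfolding s_eq by (subst prod.reindex[OF inj_on_nth_pair_singleton_indices]) simp
  moreover have "measure E {es. card (singletons (zip js es)) = card s} = 1"
    using card_singletons_zip[OF len] card_singletons_zip[OF len[OF es0(1)]] es0(2)
    by (simp add: measure_pmf.prob_eq_1 AE_measure_pmf_iff)
  ultimately show ?thesis by simp
next
  case False
  then have "measure E {es. singletons (zip js es) = s} = 0"
    by (auto simp: measure_pmf_zero_iff)
  then show ?thesis by (simp add: prod_nonneg)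
qed

lemma prob_singletons_eq_le:
  "measure (sample_pmf n D C) {X. singletons X = s}
     \<le> (\<Prod>x\<in>s. pmf (C (fst x)) (snd x)) * measure (sample_pmf n D C) {X. card (singletons X) = card s}"
proof -
  define R where "R = (\<Prod>x\<in>s. pmf (C (fst x)) (snd x))"
  have "measure (sample_pmf n D C) {X. singletons X = s}
     = measure_pmf.expectation (iid_list n D)
         (\<lambda>js. measure (seq_pmf (map C js)) {es. singletons (zip js es) = s})"
    unfolding sample_pmf_eq_bind_indices measure_bind_pmf by simp
  also have "\<dots> \<le> measure_pmf.expectation (iid_list n D)
         (\<lambda>js. R * measure (seq_pmf (map C js)) {es. card (singletons (zip js es)) = card s})"
    by (intro integral_mono measure_pmf.integrable_const_bound[where B=1] integrable_mult_right)
       (auto simp: R_def prob_singletons_zip_eq_le)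
  also have "\<dots> = R * measure (sample_pmf n D C) {X. card (singletons X) = card s}"
    unfolding sample_pmf_eq_bind_indices measure_bind_pmf by simp
  finally show ?thesis by (simp add: R_def)
qed

lemma expectation_sum_singletons:
  fixes D :: "nat pmf" and C :: "nat \<Rightarrow> 'e pmf" and F :: "nat \<times> 'e \<Rightarrow> real"
  assumes fin_D: "finite (set_pmf D)" and fin_C: "\<And>j. j \<in> set_pmf D \<Longrightarrow> finite (set_pmf (C j))"
    and F_mean: "\<And>j. j \<in> set_pmf D \<Longrightarrow> measure_pmf.expectation (C j) (\<lambda>e. F (j, e)) = c"
  shows "measure_pmf.expectation (sample_pmf n D C) (\<lambda>X. \<Sum>x\<in>singletons X. F x)
       = c * measure_pmf.expectation (sample_pmf n D C) (\<lambda>X. real (card (singletons X)))"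
proof -
  have fin_js: "finite (set_pmf (iid_list n D))" by (rule finite_set_iid_list[OF fin_D])
  have js_D: "set js \<subseteq> set_pmf D" if "js \<in> set_pmf (iid_list n D)" for js
    using set_iid_list[OF that] by simp
  have fin_seq: "finite (set_pmf (seq_pmf (map C js)))" if "js \<in> set_pmf (iid_list n D)" for js
    by (intro finite_set_seq_pmf) (use js_D[OF that] fin_C in auto)
  have fin_E: "finite (set_pmf (map_pmf (zip js) (seq_pmf (map C js))))"
    if "js \<in> set_pmf (iid_list n D)" for js
    using fin_seq[OF that] by simp
  have len: "length es = length js" if "es \<in> set_pmf (seq_pmf (map C js))" for es js
    using set_seq_pmf[OF that] by simp
  have given_js: "measure_pmf.expectation (map_pmf (zip js) (seq_pmf (map C js))) (\<lambda>X. \<Sum>x\<in>singletons X. F x)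
      = c * measure_pmf.expectation (map_pmf (zip js) (seq_pmf (map C js))) (\<lambda>X. real (card (singletons X)))"
    if js: "js \<in> set_pmf (iid_list n D)" for js
  proof -
    define E where "E = seq_pmf (map C js)"
    have "measure_pmf.expectation E (\<lambda>es. \<Sum>x\<in>singletons (zip js es). F x)
        = measure_pmf.expectation E (\<lambda>es. \<Sum>i\<in>singleton_indices js. F (js ! i, es ! i))"
      using len unfolding E_def
      by (intro expectation_cong_set_pmf)
         (simp add: singletons_zip sum.reindex[OF inj_on_nth_pair_singleton_indices])
    also have "\<dots> = (\<Sum>i\<in>singleton_indices js. measure_pmf.expectation E (\<lambda>es. F (js ! i, es ! i)))"
      using fin_seq[OF js] unfolding E_def
      by (intro Bochner_Integration.integral_sum integrable_measure_pmf_finite) simp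
    also have "\<dots> = (\<Sum>i\<in>singleton_indices js. c)"
    proof (intro sum.cong refl)
      fix i assume "i \<in> singleton_indices js"
      then have i: "i < length js" by (simp add: singleton_indices_def)
      have "measure_pmf.expectation E (\<lambda>es. F (js ! i, es ! i))
          = measure_pmf.expectation (map_pmf (\<lambda>es. es ! i) E) (\<lambda>e. F (js ! i, e))" by simp
      also have "\<dots> = c"
        using i js_D[OF js] unfolding E_def by (simp add: map_nth_seq_pmf F_mean nth_mem subsetD)
      finally show "measure_pmf.expectation E (\<lambda>es. F (js ! i, es ! i)) = c" .
    qed
    also have "\<dots> = c * measure_pmf.expectation E (\<lambda>es. real (card (singletons (zip js es))))"
      using len unfolding E_def
      by (subst expectation_cong_set_pmf[where g="\<lambda>_. real (card (singleton_indices js))"])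
         (simp_all add: card_singletons_zip)
    finally show ?thesis unfolding E_def by simp
  qed
  have "measure_pmf.expectation (sample_pmf n D C) (\<lambda>X. \<Sum>x\<in>singletons X. F x)
      = measure_pmf.expectation (iid_list n D) (\<lambda>js. c *
          measure_pmf.expectation (map_pmf (zip js) (seq_pmf (map C js))) (\<lambda>X. real (card (singletons X))))"
    unfolding sample_pmf_eq_bind_indices
    by (subst expectation_bind_pmf_finite[OF fin_js fin_E], assumption)
       (rule expectation_cong_set_pmf, rule given_js)
  also have "\<dots> = c * measure_pmf.expectation (sample_pmf n D C) (\<lambda>X. real (card (singletons X)))"
    unfolding sample_pmf_eq_bind_indices
    by (subst expectation_bind_pmf_finite[OF fin_js fin_E], assumption) simp
  finally show ?thesis .
qed

declare bsc_list.simps(2)[simp del]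

lemma pmf_bsc: "0 \<le> p \<Longrightarrow> p \<le> 1 \<Longrightarrow> pmf (bsc p b) b' = (if b' = b then 1 - p else p)"
proof -
  assume p: "0 \<le> p" "p \<le> 1"
  have "pmf (bsc p b) b' = pmf (map_pmf (\<lambda>flip. b \<noteq> flip) (bernoulli_pmf p)) ((\<lambda>flip. b \<noteq> flip) (b \<noteq> b'))"
    unfolding bsc_def by (cases b; cases b') simp_all
  also have "\<dots> = pmf (bernoulli_pmf p) (b \<noteq> b')" by (rule pmf_map_inj') (auto simp: inj_def)
  finally show ?thesis using p by (cases b; cases b') auto
qed

lemma bsc_list_Cons: "bsc_list p (c # cs) = bind_pmf (bsc p c) (\<lambda>b'. map_pmf (Cons b') (bsc_list p cs))"
  by (simp add: map_pmf_def bsc_list.simps)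

lemma length_of_set_bsc_list: "z \<in> set_pmf (bsc_list p cs) \<Longrightarrow> length z = length cs"
  by (induction cs arbitrary: z) (auto simp: bsc_list.simps)

lemma finite_set_bsc_list: "finite (set_pmf (bsc_list p cs))"
  by (rule finite_subset[OF _ finite_lists_length_eq[of UNIV "length cs"]])
     (auto dest: length_of_set_bsc_list)

lemma pmf_bsc_list_half: "length z = length cs \<Longrightarrow> pmf (bsc_list (1/2) cs) z = (1/2) ^ length cs"
proof (induction cs arbitrary: z)
  case (Cons c cs)
  then obtain b zs where "z = b # zs" by (cases z) auto
  with Cons show ?case by (simp add: bsc_list_Cons pmf_bind_map_Cons pmf_bsc)
qed simp

lemma expectation_log_pmf_bsc:
  assumes "0 \<le> p" "p \<le> 1"
  shows "measure_pmf.expectation (bsc p c) (\<lambda>b'. log 2 (pmf (bsc p c) b')) = - bin_entropy p"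
proof -
  have "measure_pmf.expectation (bsc p c) (\<lambda>b'. log 2 (pmf (bsc p c) b'))
      = measure_pmf.expectation (bernoulli_pmf p) (\<lambda>flip. log 2 (pmf (bsc p c) (c \<noteq> flip)))"
    unfolding bsc_def[of p c] by simp
  also have "\<dots> = log 2 p * p + log 2 (1 - p) * (1 - p)"
    using assms by (simp add: pmf_bsc)
  finally show ?thesis by (simp add: bin_entropy_def algebra_simps)
qed

lemma expectation_log_pmf_bsc_list:
  assumes "0 \<le> p" "p \<le> 1"
  shows "measure_pmf.expectation (bsc_list p cs) (\<lambda>z. log 2 (pmf (bsc_list p cs) z))
       = - real (length cs) * bin_entropy p"
proof (induction cs)
  case (Cons c cs)
  have "measure_pmf.expectation (bsc_list p (c # cs)) (\<lambda>z. log 2 (pmf (bsc_list p (c # cs)) z))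
      = measure_pmf.expectation (bsc p c) (\<lambda>b'. measure_pmf.expectation (bsc_list p cs)
            (\<lambda>z. log 2 (pmf (bsc_list p (c # cs)) (b' # z))))"
    by (subst (1) bsc_list_Cons, subst expectation_bind_pmf_finite) (simp_all add: finite_set_bsc_list)
  also have "\<dots> = measure_pmf.expectation (bsc p c) (\<lambda>b'. measure_pmf.expectation (bsc_list p cs)
            (\<lambda>z. log 2 (pmf (bsc p c) b') + log 2 (pmf (bsc_list p cs) z)))"
    by (intro expectation_cong_set_pmf)
       (simp add: bsc_list_Cons pmf_bind_map_Cons log_mult_pos pmf_positive)
  also have "\<dots> = measure_pmf.expectation (bsc p c) (\<lambda>b'. log 2 (pmf (bsc p c) b'))
        + measure_pmf.expectation (bsc_list p cs) (\<lambda>z. log 2 (pmf (bsc_list p cs) z))"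
    by (simp add: integrable_measure_pmf_finite finite_set_bsc_list)
  finally show ?case
    using Cons expectation_log_pmf_bsc[OF assms] by (simp add: algebra_simps)
qed simp

section \<open>The next-symbol-prediction component\<close>

lemma nsp_component_eq_pair: "nsp_component d \<delta> c = bind_pmf (pmf_of_set {0..<d})
    (\<lambda>l. pair_pmf (bsc_list (\<delta>/2) (take l c)) (bsc (\<delta>/2) (c ! l)))"
  unfolding nsp_component_def pair_pmf_def by simp

text \<open>Only the prefix length \<open>l = length z\<close> can produce the feature \<open>z\<close>.\<close>
lemma pmf_nsp_component:
  assumes "length c = d" "d \<ge> 1"
  shows "pmf (nsp_component d \<delta> c) (z, y) = (if length z < d then
      pmf (bsc_list (\<delta>/2) (take (length z) c)) z * pmf (bsc (\<delta>/2) (c ! length z)) y / d else 0)"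
proof -
  define t where "t l = pmf (bsc_list (\<delta>/2) (take l c)) z * pmf (bsc (\<delta>/2) (c ! l)) y" for l
  have "t l = 0" if "l < d" "l \<noteq> length z" for l
    using that assms length_of_set_bsc_list by (fastforce simp: t_def set_pmf_iff)
  then have "(\<Sum>l\<in>{0..<d}. t l) = (\<Sum>l\<in>{0..<d}. if l = length z then t (length z) else 0)"
    by (intro sum.cong) auto
  moreover have "pmf (nsp_component d \<delta> c) (z, y) = (\<Sum>l\<in>{0..<d}. t l) / d"
    unfolding nsp_component_eq_pair using assms
    by (subst pmf_bind_pmf_of_set) (auto simp: pmf_pair t_def)
  ultimately show ?thesis by (simp add: t_def)
qed

lemma length_lt_of_set_nsp_component:
  assumes "length c = d" "d \<ge> 1" "(z, y) \<in> set_pmf (nsp_component d \<delta> c)"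
  shows "length z < d"
  using assms pmf_nsp_component[OF assms(1,2), of \<delta> z y] by (auto simp: set_pmf_iff split: if_splits)

lemma finite_set_nsp_component: "finite (set_pmf (nsp_component d \<delta> c))"
proof -
  have "set_pmf (nsp_component d \<delta> c) \<subseteq> (\<Union>l\<le>length c. {z. set z \<subseteq> UNIV \<and> length z = l} \<times> UNIV)"
    unfolding nsp_component_def by (auto dest!: length_of_set_bsc_list)
  then show ?thesis
    by (rule finite_subset) (intro finite_UN_I finite_cartesian_product finite_lists_length_eq; simp)
qed

text \<open>With \<open>\<delta> = 1\<close> all bits are uniform: this is the reference component \<open>q\<^sub>0\<close>.\<close>
lemma pmf_nsp_component_uniform:
  assumes "d \<ge> 1" "length z < d"
  shows "pmf (nsp_component d 1 (replicate d False)) (z, y) = (1/2) ^ length z * (1/2) / d"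
  using assms pmf_nsp_component[of "replicate d False" d 1 z y]
  by (simp add: pmf_bsc_list_half pmf_bsc)

lemma pmf_nsp_component_uniform_pos:
  assumes "length c = d" "d \<ge> 1" "e \<in> set_pmf (nsp_component d \<delta> c)"
  shows "pmf (nsp_component d 1 (replicate d False)) e > 0"
  using assms length_lt_of_set_nsp_component[OF assms(1,2)] pmf_nsp_component_uniform[OF assms(2)]
  by (cases e) auto

lemma sum_Suc_real: "(\<Sum>l<d. real l + 1) = real d * (real d + 1) / 2"
  by (induction d) (simp_all add: field_simps)

text \<open>On prefixes of length \<open>l\<close>, the log-likelihood ratio against \<open>q\<^sub>0\<close> is that of the two channel
  outputs plus the \<open>l + 1\<close> bits paid by \<open>q\<^sub>0\<close>; the factor \<open>1/d\<close> for the choice of \<open>l\<close> cancels.\<close>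
lemma log_pmf_nsp_component_div_uniform:
  assumes c: "length c = d" and l: "l < d" and \<delta>: "0 \<le> \<delta>" "\<delta> \<le> 1"
    and z: "z \<in> set_pmf (bsc_list (\<delta>/2) (take l c))" and y: "y \<in> set_pmf (bsc (\<delta>/2) (c ! l))"
  shows "log 2 (pmf (nsp_component d \<delta> c) (z, y) / pmf (nsp_component d 1 (replicate d False)) (z, y))
    = log 2 (pmf (bsc_list (\<delta>/2) (take l c)) z) + log 2 (pmf (bsc (\<delta>/2) (c ! l)) y) + (real l + 1)"
proof -
  define A where "A = pmf (bsc_list (\<delta>/2) (take l c)) z"
  define B where "B = pmf (bsc (\<delta>/2) (c ! l)) y"
  have pos: "A > 0" "B > 0" using z y by (simp_all add: A_def B_def pmf_positive)
  have d: "d \<ge> 1" and lz: "length z = l" using l c length_of_set_bsc_list[OF z] by auto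
  have "pmf (nsp_component d \<delta> c) (z, y) = A * B / d"
    using pmf_nsp_component[OF c d, of \<delta> z y] lz l by (simp add: A_def B_def)
  moreover have "pmf (nsp_component d 1 (replicate d False)) (z, y) = (1/2) ^ l * (1/2) / d"
    using pmf_nsp_component_uniform[OF d, of z y] lz l by simp
  moreover have "A * B / d / ((1/2) ^ l * (1/2) / d) = A * (B * 2 ^ (l + 1))"
    using d by (simp add: field_simps power_one_over)
  ultimately have "pmf (nsp_component d \<delta> c) (z, y) / pmf (nsp_component d 1 (replicate d False)) (z, y)
      = A * (B * 2 ^ (l + 1))"
    by simp
  also have "log 2 \<dots> = log 2 A + (log 2 B + log 2 (2 ^ (l + 1)))"
    using pos by (simp add: log_mult_pos)
  also have "log 2 (2 ^ (l + 1)) = real l + 1"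
    by (subst log_pow_cancel) auto
  finally show ?thesis by (simp add: A_def B_def)
qed

lemma kl_nsp_component_uniform:
  assumes c: "length c = d" and d: "d \<ge> 1" and \<delta>: "0 \<le> \<delta>" "\<delta> \<le> 1"
  shows "measure_pmf.expectation (nsp_component d \<delta> c)
      (\<lambda>e. log 2 (pmf (nsp_component d \<delta> c) e / pmf (nsp_component d 1 (replicate d False)) e))
      = (real d + 1) / 2 * (1 - bin_entropy (\<delta>/2))"
proof -
  define p where "p = \<delta>/2"
  have p: "0 \<le> p" "p \<le> 1" using \<delta> by (auto simp: p_def)
  define G where "G e = log 2 (pmf (nsp_component d \<delta> c) e / pmf (nsp_component d 1 (replicate d False)) e)" for e
  define PL where "PL l = pair_pmf (bsc_list p (take l c)) (bsc p (c ! l))" for l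
  have fin_PL: "finite (set_pmf (PL l))" for l
    by (simp add: PL_def finite_set_bsc_list)
  have given_l: "measure_pmf.expectation (PL l) G = (real l + 1) * (1 - bin_entropy p)" if "l < d" for l
  proof -
    have tl: "length (take l c) = l" using that c by simp
    have "measure_pmf.expectation (PL l) G = measure_pmf.expectation (PL l)
        (\<lambda>e. log 2 (pmf (bsc_list p (take l c)) (fst e)) + log 2 (pmf (bsc p (c ! l)) (snd e)) + (real l + 1))"
      using log_pmf_nsp_component_div_uniform[OF c that \<delta>]
      by (intro expectation_cong_set_pmf) (auto simp: PL_def G_def p_def)
    also have "\<dots> = measure_pmf.expectation (bsc_list p (take l c)) (\<lambda>z. log 2 (pmf (bsc_list p (take l c)) z))
        + measure_pmf.expectation (bsc p (c ! l)) (\<lambda>y. log 2 (pmf (bsc p (c ! l)) y)) + (real l + 1)"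
      unfolding PL_def
      by (simp add: integrable_measure_pmf_finite finite_set_bsc_list
          expectation_pair_pmf_fst[where f="\<lambda>z. log 2 (pmf (bsc_list p (take l c)) z)"]
          expectation_pair_pmf_snd[where f="\<lambda>y. log 2 (pmf (bsc p (c ! l)) y)"])
    also have "\<dots> = (real l + 1) * (1 - bin_entropy p)"
      using expectation_log_pmf_bsc_list[OF p, of "take l c"] expectation_log_pmf_bsc[OF p] tl
      by (simp add: algebra_simps)
    finally show ?thesis .
  qed
  have "measure_pmf.expectation (nsp_component d \<delta> c) G
      = measure_pmf.expectation (pmf_of_set {0..<d}) (\<lambda>l. measure_pmf.expectation (PL l) G)"
    unfolding nsp_component_eq_pair PL_def[symmetric] p_def[symmetric]
    using d by (intro expectation_bind_pmf_finite fin_PL) auto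
  also have "\<dots> = (\<Sum>l<d. (real l + 1) * (1 - bin_entropy p)) / d"
    using d given_l by (subst integral_pmf_of_set) (auto simp: atLeast0LessThan lessThan_empty_iff)
  also have "\<dots> = (real d + 1) / 2 * (1 - bin_entropy p)"
    using d by (simp add: sum_distrib_right[symmetric] sum_Suc_real)
  finally show ?thesis unfolding G_def p_def .
qed

definition nsp_reference :: "nat \<Rightarrow> nat \<Rightarrow> (nat \<times> bool list \<times> bool) pmf" where
  "nsp_reference N d = pair_pmf (pmf_of_set {..<N}) (nsp_component d 1 (replicate d False))"

lemma kl_nsp_component_reference:
  assumes c: "length c = d" and d: "d \<ge> 1" and \<delta>: "0 \<le> \<delta>" "\<delta> \<le> 1" and j: "j < N"
  shows "measure_pmf.expectation (nsp_component d \<delta> c)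
       (\<lambda>e. log 2 (pmf (nsp_component d \<delta> c) e / pmf (nsp_reference N d) (j, e)))
     = (real d + 1) / 2 * (1 - bin_entropy (\<delta>/2)) + log 2 (real N)"
proof -
  define A where "A = nsp_component d \<delta> c"
  define Q where "Q = nsp_component d 1 (replicate d False)"
  have "log 2 (pmf A e / pmf (nsp_reference N d) (j, e)) = log 2 (pmf A e / pmf Q e) + log 2 (real N)"
    if e: "e \<in> set_pmf A" for e
  proof -
    have "pmf (nsp_reference N d) (j, e) = pmf Q e / N"
      using j unfolding nsp_reference_def Q_def by (simp add: pmf_pair lessThan_empty_iff)
    then have ratio: "pmf A e / pmf (nsp_reference N d) (j, e) = (pmf A e / pmf Q e) * real N"
      by (simp only: divide_divide_eq_right times_divide_eq_left)
    have "pmf A e / pmf Q e > 0"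
      using e pmf_nsp_component_uniform_pos[OF c d] by (simp add: A_def Q_def pmf_positive)
    then show ?thesis
      unfolding ratio using j by (intro log_mult_pos) auto
  qed
  then have "measure_pmf.expectation A (\<lambda>e. log 2 (pmf A e / pmf (nsp_reference N d) (j, e)))
      = measure_pmf.expectation A (\<lambda>e. log 2 (pmf A e / pmf Q e) + log 2 (real N))"
    by (rule expectation_cong_set_pmf)
  also have "\<dots> = measure_pmf.expectation A (\<lambda>e. log 2 (pmf A e / pmf Q e)) + log 2 (real N)"
    by (simp add: integrable_measure_pmf_finite A_def finite_set_nsp_component)
  finally show ?thesis
    unfolding A_def Q_def kl_nsp_component_uniform[OF c d \<delta>] .
qed

section \<open>Conditional information carried by the singletons\<close>

lemma pmf_singletons_mixture_le:
  fixes n :: nat and PD :: "'p pmf" and D :: "'p \<Rightarrow> nat pmf" and C :: "'p \<Rightarrow> nat \<Rightarrow> 'e pmf"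
  defines "M \<equiv> bind_pmf PD (\<lambda>P. map_pmf (Pair P) (sample_pmf n (D P) (C P)))"
  shows "pmf (map_pmf (\<lambda>w. (singletons (snd w), fst w, card (singletons (snd w)))) M) (s, P, card s)
     \<le> (\<Prod>x\<in>s. pmf (C P (fst x)) (snd x))
        * pmf (map_pmf (\<lambda>w. (fst w, card (singletons (snd w)))) M) (P, card s)"
proof -
  define X where "X = sample_pmf n (D P) (C P)"
  have joint: "pmf (map_pmf (\<lambda>w. (singletons (snd w), fst w, card (singletons (snd w)))) M) (s, P, card s)
      = pmf PD P * measure X {X. singletons X = s}"
  proof -
    have "pmf (map_pmf (\<lambda>w. (singletons (snd w), fst w, card (singletons (snd w)))) M) (s, P, card s)
        = measure M {w. fst w = P \<and> singletons (snd w) = s}"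
      unfolding pmf_map by (intro arg_cong[where f="measure M"]) auto
    then show ?thesis
      unfolding M_def X_def measure_bind_Pair_fst_eq[where P="\<lambda>X. singletons X = s"] .
  qed
  have marginal: "pmf (map_pmf (\<lambda>w. (fst w, card (singletons (snd w)))) M) (P, card s)
      = pmf PD P * measure X {X. card (singletons X) = card s}"
  proof -
    have "pmf (map_pmf (\<lambda>w. (fst w, card (singletons (snd w)))) M) (P, card s)
        = measure M {w. fst w = P \<and> card (singletons (snd w)) = card s}"
      unfolding pmf_map by (intro arg_cong[where f="measure M"]) auto
    then show ?thesis
      unfolding M_def X_def measure_bind_Pair_fst_eq[where P="\<lambda>X. card (singletons X) = card s"] .
  qed
  show ?thesis
    unfolding joint marginal X_def
    using mult_left_mono[OF prob_singletons_eq_le pmf_nonneg] by (simp add: mult_ac)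
qed

lemma expectation_sum_singletons_mixture:
  fixes n :: nat and PD :: "'p pmf" and D :: "'p \<Rightarrow> nat pmf" and C :: "'p \<Rightarrow> nat \<Rightarrow> 'e pmf"
    and F :: "'p \<Rightarrow> nat \<times> 'e \<Rightarrow> real"
  defines "M \<equiv> bind_pmf PD (\<lambda>P. map_pmf (Pair P) (sample_pmf n (D P) (C P)))"
  assumes fin_PD: "finite (set_pmf PD)" and fin_D: "\<And>P. P \<in> set_pmf PD \<Longrightarrow> finite (set_pmf (D P))"
    and fin_C: "\<And>P j. P \<in> set_pmf PD \<Longrightarrow> j \<in> set_pmf (D P) \<Longrightarrow> finite (set_pmf (C P j))"
    and F_mean: "\<And>P j. P \<in> set_pmf PD \<Longrightarrow> j \<in> set_pmf (D P) \<Longrightarrow>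
      measure_pmf.expectation (C P j) (\<lambda>e. F P (j, e)) = c"
  shows "measure_pmf.expectation M (\<lambda>w. \<Sum>x\<in>singletons (snd w). F (fst w) x)
       = c * measure_pmf.expectation M (\<lambda>w. real (card (singletons (snd w))))"
proof -
  have fin: "finite (set_pmf (map_pmf (Pair P) (sample_pmf n (D P) (C P))))" if "P \<in> set_pmf PD" for P
    using finite_set_sample_pmf[OF fin_D[OF that] fin_C[OF that]] by simp
  have "measure_pmf.expectation M (\<lambda>w. \<Sum>x\<in>singletons (snd w). F (fst w) x)
      = measure_pmf.expectation PD (\<lambda>P. measure_pmf.expectation (sample_pmf n (D P) (C P))
          (\<lambda>X. \<Sum>x\<in>singletons X. F P x))"
    unfolding M_def by (subst expectation_bind_pmf_finite[OF fin_PD fin], assumption) simp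
  also have "\<dots> = measure_pmf.expectation PD (\<lambda>P. c * measure_pmf.expectation (sample_pmf n (D P) (C P))
          (\<lambda>X. real (card (singletons X))))"
    using fin_D fin_C F_mean by (intro expectation_cong_set_pmf expectation_sum_singletons) auto
  also have "\<dots> = c * measure_pmf.expectation M (\<lambda>w. real (card (singletons (snd w))))"
    unfolding M_def by (subst expectation_bind_pmf_finite[OF fin_PD fin], assumption) simp
  finally show ?thesis .
qed

lemma log_prod_div_pmf_set_iid_list_le:
  assumes fin: "finite s" and b: "b > 1"
    and f_pos: "\<And>x. x \<in> s \<Longrightarrow> f x > 0" and \<nu>_pos: "\<And>x. x \<in> s \<Longrightarrow> pmf \<nu> x > 0"
  shows "log b ((\<Prod>x\<in>s. f x) / pmf (map_pmf set (iid_list (card s) \<nu>)) s)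
    \<le> (\<Sum>x\<in>s. log b (f x / pmf \<nu> x))"
proof -
  have R: "(\<Prod>x\<in>s. f x) > 0" and P: "(\<Prod>x\<in>s. pmf \<nu> x) > 0"
    using f_pos \<nu>_pos by (simp_all add: prod_pos)
  have "log b ((\<Prod>x\<in>s. f x) / pmf (map_pmf set (iid_list (card s) \<nu>)) s)
      \<le> log b ((\<Prod>x\<in>s. f x) / (\<Prod>x\<in>s. pmf \<nu> x))"
    using R P pmf_set_iid_list_ge[OF fin, of \<nu>] b
    by (subst log_le_cancel_iff) (auto intro: divide_left_mono)
  also have "\<dots> = log b (\<Prod>x\<in>s. f x / pmf \<nu> x)"
    by (simp add: prod_dividef)
  also have "\<dots> = (\<Sum>x\<in>s. log b (f x / pmf \<nu> x))"
  proof -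
    have "ln (\<Prod>x\<in>s. f x / pmf \<nu> x) = (\<Sum>x\<in>s. ln (f x / pmf \<nu> x))"
      using fin f_pos \<nu>_pos by (intro ln_prod) (auto simp: less_imp_neq[symmetric])
    then show ?thesis by (simp add: log_def sum_divide_distrib)
  qed
  finally show ?thesis .
qed

lemma cond_mutual_info_singletons_le:
  fixes n :: nat and PD :: "'p pmf" and D :: "'p \<Rightarrow> nat pmf" and C :: "'p \<Rightarrow> nat \<Rightarrow> 'e pmf"
    and \<nu> :: "(nat \<times> 'e) pmf"
  defines "M \<equiv> bind_pmf PD (\<lambda>P. map_pmf (Pair P) (sample_pmf n (D P) (C P)))"
  assumes b: "b > 1" and fin_PD: "finite (set_pmf PD)"
    and fin_D: "\<And>P. P \<in> set_pmf PD \<Longrightarrow> finite (set_pmf (D P))"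
    and fin_C: "\<And>P j. P \<in> set_pmf PD \<Longrightarrow> j \<in> set_pmf (D P) \<Longrightarrow> finite (set_pmf (C P j))"
    and \<nu>_pos: "\<And>P j e. P \<in> set_pmf PD \<Longrightarrow> j \<in> set_pmf (D P) \<Longrightarrow> e \<in> set_pmf (C P j) \<Longrightarrow>
      pmf \<nu> (j, e) > 0"
    and kl: "\<And>P j. P \<in> set_pmf PD \<Longrightarrow> j \<in> set_pmf (D P) \<Longrightarrow>
      measure_pmf.expectation (C P j) (\<lambda>e. log b (pmf (C P j) e / pmf \<nu> (j, e))) = c"
  shows "cond_mutual_info b M (\<lambda>w. singletons (snd w)) fst (\<lambda>w. card (singletons (snd w)))
    \<le> c * measure_pmf.expectation M (\<lambda>w. real (card (singletons (snd w))))"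
proof -
  define R where "R s P = (\<Prod>x\<in>s. pmf (C P (fst x)) (snd x))" for s and P :: 'p
  define Q where "Q k = map_pmf set (iid_list k \<nu>)" for k
  define F where "F P x = log b (pmf (C P (fst x)) (snd x) / pmf \<nu> x)" for P :: 'p and x
  have fin_M: "finite (set_pmf M)"
    unfolding M_def using fin_PD fin_D fin_C by (auto intro!: finite_UN_I finite_set_sample_pmf)
  have support: "fst x \<in> set_pmf (D (fst w)) \<and> snd x \<in> set_pmf (C (fst w) (fst x))"
    if "w \<in> set_pmf M" "x \<in> singletons (snd w)" for w x
  proof -
    have "snd w \<in> set_pmf (sample_pmf n (D (fst w)) (C (fst w)))"
      using that(1) unfolding M_def by auto
    moreover have "x \<in> set (snd w)" using that(2) by (simp add: singletons_def)
    ultimately show ?thesis by (rule set_sample_pmf)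
  qed
  have fst_w: "fst w \<in> set_pmf PD" if "w \<in> set_pmf M" for w
    using that unfolding M_def by auto
  have C_pos: "pmf (C (fst w) (fst x)) (snd x) > 0" and \<nu>_pos': "pmf \<nu> x > 0"
    if "w \<in> set_pmf M" "x \<in> singletons (snd w)" for w x
    using support[OF that] \<nu>_pos[OF fst_w[OF that(1)], of "fst x" "snd x"] by (auto simp: pmf_positive)
  have fin_S: "finite (singletons X)" for X
    unfolding singletons_def by simp
  have "cond_mutual_info b M (\<lambda>w. singletons (snd w)) fst (\<lambda>w. card (singletons (snd w)))
      \<le> measure_pmf.expectation M (\<lambda>w. log b (R (singletons (snd w)) (fst w)
            / pmf (Q (card (singletons (snd w)))) (singletons (snd w))))"
  proof (rule cond_mutual_info_le_expectation_log[OF fin_M b, where R="\<lambda>s P k. R s P"])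
    fix w assume w: "w \<in> set_pmf M"
    show "R (singletons (snd w)) (fst w) > 0"
      unfolding R_def using C_pos[OF w] by (simp add: prod_pos)
    show "pmf (Q (card (singletons (snd w)))) (singletons (snd w)) > 0"
      unfolding Q_def using pmf_set_iid_list_ge[OF fin_S] \<nu>_pos'[OF w]
      by (smt (verit) prod_pos)
    show "pmf (map_pmf (\<lambda>w. (singletons (snd w), fst w, card (singletons (snd w)))) M)
        (singletons (snd w), fst w, card (singletons (snd w)))
      \<le> R (singletons (snd w)) (fst w) * pmf (map_pmf (\<lambda>w. (fst w, card (singletons (snd w)))) M)
        (fst w, card (singletons (snd w)))"
      unfolding M_def R_def by (rule pmf_singletons_mixture_le)
  qed
  also have "\<dots> \<le> measure_pmf.expectation M (\<lambda>w. \<Sum>x\<in>singletons (snd w). F (fst w) x)"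
    unfolding R_def Q_def F_def
    using fin_S b C_pos \<nu>_pos'
    by (intro integral_mono_AE integrable_measure_pmf_finite fin_M)
       (auto simp: AE_measure_pmf_iff intro!: log_prod_div_pmf_set_iid_list_le)
  also have "\<dots> = c * measure_pmf.expectation M (\<lambda>w. real (card (singletons (snd w))))"
    unfolding M_def using fin_PD fin_D fin_C kl
    by (intro expectation_sum_singletons_mixture) (auto simp: F_def)
  finally show ?thesis .
qed

section \<open>The learning task as a mixture of samples\<close>

definition problem_pmf :: "nat \<Rightarrow> 'e pmf pmf \<Rightarrow> real list \<Rightarrow> (real list \<times> 'e pmf list) pmf" where
  "problem_pmf N q \<pi> = do {
      C \<leftarrow> iid_list N q;
      \<delta>s \<leftarrow> iid_list N (map_pmf (\<lambda>i. \<pi> ! i) (pmf_of_set {..<length \<pi>}));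
      return_pmf (map (\<lambda>x. x / sum_list \<delta>s) \<delta>s, C) }"

definition subpopulation_pmf :: "nat \<Rightarrow> real list \<Rightarrow> nat pmf" where
  "subpopulation_pmf N D = embed_pmf (\<lambda>j. if j < N then D ! j else 0)"

lemma learn_pmf_eq_mixture:
  "learn_pmf n N q \<pi> = bind_pmf (problem_pmf N q \<pi>)
     (\<lambda>P. map_pmf (Pair P) (sample_pmf n (subpopulation_pmf N (fst P)) (\<lambda>j. snd P ! j)))"
  unfolding learn_pmf_def problem_pmf_def sample_pmf_def subpopulation_pmf_def Let_def
  by (simp add: bind_assoc_pmf bind_return_pmf map_pmf_def cong: if_cong)

text \<open>\<open>embed_pmf\<close> is only meaningful on a genuine density, so positivity of the weights is needed
  even for this support statement.\<close>
lemma set_subpopulation_pmf_normalized: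
  assumes len: "length \<delta>s = N" and N: "N \<ge> 1" and pos: "\<forall>x\<in>set \<delta>s. x > 0"
  shows "set_pmf (subpopulation_pmf N (map (\<lambda>x. x / sum_list \<delta>s) \<delta>s)) \<subseteq> {..<N}"
proof -
  define f where "f j = (if j < N then map (\<lambda>x. x / sum_list \<delta>s) \<delta>s ! j else 0)" for j
  have sum_eq: "sum_list \<delta>s = (\<Sum>i<N. \<delta>s ! i)"
    using len by (simp add: sum_list_sum_nth atLeast0LessThan)
  have pos_i: "\<delta>s ! i > 0" if "i < N" for i using len pos that by simp
  have sum_pos: "sum_list \<delta>s > 0"
    unfolding sum_eq using N pos_i by (intro sum_pos) (auto simp: lessThan_empty_iff)
  have f_nonneg: "0 \<le> f j" for j
    using pos_i sum_pos len by (auto simp: f_def intro: less_imp_le)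
  have "(\<integral>\<^sup>+j. ennreal (f j) \<partial>count_space UNIV) = (\<Sum>j<N. ennreal (\<delta>s ! j / sum_list \<delta>s))"
    using len by (subst nn_integral_count_space'[of "{..<N}"]) (auto simp: f_def)
  also have "\<dots> = ennreal (\<Sum>j<N. \<delta>s ! j / sum_list \<delta>s)"
    using pos_i sum_pos by (subst sum_ennreal) (auto intro: less_imp_le)
  also have "(\<Sum>j<N. \<delta>s ! j / sum_list \<delta>s) = 1"
    using sum_pos unfolding sum_divide_distrib[symmetric] sum_eq[symmetric] by simp
  finally have "(\<integral>\<^sup>+j. ennreal (f j) \<partial>count_space UNIV) = 1" by simp
  then have "set_pmf (embed_pmf f) = {j. f j \<noteq> 0}"
    using set_embed_pmf[of f, OF f_nonneg] by simp
  moreover have "subpopulation_pmf N (map (\<lambda>x. x / sum_list \<delta>s) \<delta>s) = embed_pmf f"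
    unfolding subpopulation_pmf_def f_def[abs_def] ..
  ultimately show ?thesis by (auto simp: f_def)
qed

lemma set_problem_pmf:
  assumes P: "P \<in> set_pmf (problem_pmf N q \<pi>)" and N: "N \<ge> 1"
    and \<pi>: "\<pi> \<noteq> []" "\<forall>x\<in>set \<pi>. x > 0"
  shows "set_pmf (subpopulation_pmf N (fst P)) \<subseteq> {..<N}" and "\<And>j. j < N \<Longrightarrow> snd P ! j \<in> set_pmf q"
proof -
  from P obtain C \<delta>s where C: "C \<in> set_pmf (iid_list N q)"
    and \<delta>s: "\<delta>s \<in> set_pmf (iid_list N (map_pmf (\<lambda>i. \<pi> ! i) (pmf_of_set {..<length \<pi>})))"
    and P_eq: "P = (map (\<lambda>x. x / sum_list \<delta>s) \<delta>s, C)"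
    unfolding problem_pmf_def by auto
  have "set_pmf (pmf_of_set {..<length \<pi>}) = {..<length \<pi>}"
    using \<pi>(1) by (intro set_pmf_of_set) auto
  then have "length \<delta>s = N" "\<forall>x\<in>set \<delta>s. x > 0"
    using set_iid_list[OF \<delta>s] \<pi>(2) by auto
  then show "set_pmf (subpopulation_pmf N (fst P)) \<subseteq> {..<N}"
    unfolding P_eq using set_subpopulation_pmf_normalized[of \<delta>s N] N by simp
  show "snd P ! j \<in> set_pmf q" if "j < N" for j
    using set_iid_list[OF C] that unfolding P_eq by auto
qed

lemma finite_set_problem_pmf:
  assumes "finite (set_pmf q)" "\<pi> \<noteq> []"
  shows "finite (set_pmf (problem_pmf N q \<pi>))"
  using assms unfolding problem_pmf_def
  by (auto intro!: finite_UN_I finite_set_iid_list simp: lessThan_empty_iff)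

lemma set_q_NSP: "C \<in> set_pmf (q_NSP d \<delta>) \<Longrightarrow> \<exists>c. length c = d \<and> C = nsp_component d \<delta> c"
  unfolding q_NSP_def using finite_lists_length_eq[of "UNIV :: bool set" d]
  by (subst (asm) set_map_pmf, subst (asm) set_pmf_of_set) (auto intro: exI[of _ "replicate d False"])

lemma finite_set_q_NSP: "finite (set_pmf (q_NSP d \<delta>))"
  unfolding q_NSP_def using finite_lists_length_eq[of "UNIV :: bool set" d]
  by (subst set_map_pmf, subst set_pmf_of_set) (auto intro: exI[of _ "replicate d False"])

theorem lemma3p1:
  fixes n N d :: nat and \<delta> :: real and \<pi> :: "real list"
  assumes "n \<ge> 1" and "N \<ge> 1" and "d \<ge> 1"
    and "0 \<le> \<delta>" and "\<delta> < 1"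
    and "\<pi> \<noteq> []" and "\<forall>x\<in>set \<pi>. x > 0"
  shows "let M = learn_pmf n N (q_NSP d \<delta>) \<pi>;
             K = (\<lambda>w. card (singletons (snd w)));
             \<mu>\<^sub>1 = measure_pmf.expectation M (\<lambda>w. real (K w)) / real n
         in cond_mutual_info 2 M (\<lambda>w. singletons (snd w)) fst K
            \<le> \<mu>\<^sub>1 * real n * ((real d + 1) / 2) * (1 - bin_entropy (\<delta> / 2))
               + \<mu>\<^sub>1 * real n * log 2 (real N)"
proof -
  define PD where "PD = problem_pmf N (q_NSP d \<delta>) \<pi>"
  define c where "c = (real d + 1) / 2 * (1 - bin_entropy (\<delta> / 2)) + log 2 (real N)"
  have index: "j < N" if "P \<in> set_pmf PD" "j \<in> set_pmf (subpopulation_pmf N (fst P))" for P j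
    using set_problem_pmf(1)[OF that(1)[unfolded PD_def] assms(2,6,7)] that(2) by auto
  have component: "\<exists>cs. length cs = d \<and> snd P ! j = nsp_component d \<delta> cs"
    if "P \<in> set_pmf PD" "j \<in> set_pmf (subpopulation_pmf N (fst P))" for P j
    using set_problem_pmf(2)[OF that(1)[unfolded PD_def] assms(2,6,7) index[OF that]] set_q_NSP
    by blast
  have "cond_mutual_info 2 (learn_pmf n N (q_NSP d \<delta>) \<pi>) (\<lambda>w. singletons (snd w)) fst
      (\<lambda>w. card (singletons (snd w)))
    \<le> c * measure_pmf.expectation (learn_pmf n N (q_NSP d \<delta>) \<pi>) (\<lambda>w. real (card (singletons (snd w))))"
    unfolding learn_pmf_eq_mixture PD_def[symmetric]
  proof (rule cond_mutual_info_singletons_le[where \<nu>="nsp_reference N d"])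
    show "finite (set_pmf PD)"
      unfolding PD_def using assms(6) by (intro finite_set_problem_pmf finite_set_q_NSP)
    show "finite (set_pmf (subpopulation_pmf N (fst P)))" if "P \<in> set_pmf PD" for P
      using index[OF that] by (intro finite_subset[OF _ finite_lessThan[of N]]) auto
    show "finite (set_pmf (snd P ! j))"
      if "P \<in> set_pmf PD" "j \<in> set_pmf (subpopulation_pmf N (fst P))" for P j
      using component[OF that] finite_set_nsp_component by auto
    show "pmf (nsp_reference N d) (j, e) > 0"
      if P: "P \<in> set_pmf PD" and j: "j \<in> set_pmf (subpopulation_pmf N (fst P))"
        and e: "e \<in> set_pmf (snd P ! j)" for P j e
    proof -
      obtain cs where "length cs = d" "snd P ! j = nsp_component d \<delta> cs"
        using component[OF P j] by blast
      then have "pmf (nsp_component d 1 (replicate d False)) e > 0"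
        using pmf_nsp_component_uniform_pos assms(3) e by metis
      then show ?thesis
        using index[OF P j] by (simp add: nsp_reference_def pmf_pair lessThan_empty_iff)
    qed
    show "measure_pmf.expectation (snd P ! j) (\<lambda>e. log 2 (pmf (snd P ! j) e / pmf (nsp_reference N d) (j, e))) = c"
      if "P \<in> set_pmf PD" "j \<in> set_pmf (subpopulation_pmf N (fst P))" for P j
      using component[OF that] index[OF that] kl_nsp_component_reference assms(3-5)
      by (auto simp: c_def)
  qed simp
  then show ?thesis
    using assms(1) by (simp add: Let_def c_def algebra_simps)
qed

end
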